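(* Let $T\ge2$, let $n\ge2T^2$ be an integer, and $N=\frac{\sqrt{2n+1}+\sqrt{2n+3}}{2}$. Then for all $x,y\in[-T,T]$, $$k_n(x,y)=\frac1\pi\frac{\sin N(x-y)}{x-y}+R_n(x,y)\qquad\text{with}\qquad |R_n(x,y)|\le\frac{17T^2}{\sqrt{2n+1}},$$ where for $x=y$ the first term is interpreted as $N/\pi$.
   Context: For an integer $n\ge0$, $H_n(x)=(-1)^n e^{x^2}\frac{d^n}{dx^n}e^{-x^2}$ is the $n$-th Hermite polynomial and $h_n(x)=\frac{1}{\pi^{1/4}\sqrt{2^n n!}}H_n(x)e^{-x^2/2}$ is the $n$-th Hermite function; $(h_n)_{n\ge0}$ is an orthonormal basis of $L^2(\mathbb R)$. The kernel $k_n(x,y)=\sum_{k=0}^n h_k(x)h_k(y)$ is the kernel of the orthogonal projection of $L^2(\mathbb R)$ onto $\mathrm{span}(h_0,\dots,h_n)$. *)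

theory Defs
  imports "HOL-Analysis.Analysis"
begin

definition hermite_poly :: "nat \<Rightarrow> real \<Rightarrow> real" where
  "hermite_poly n x = (-1) ^ n * exp (x\<^sup>2) * ((deriv ^^ n) (\<lambda>t. exp (- t\<^sup>2)) x)"

definition hermite_fun :: "nat \<Rightarrow> real \<Rightarrow> real" where
  "hermite_fun n x = hermite_poly n x * exp (- x\<^sup>2 / 2) / (pi powr (1/4) * sqrt (2 ^ n * fact n))"

definition hermite_kernel :: "nat \<Rightarrow> real \<Rightarrow> real \<Rightarrow> real" where
  "hermite_kernel n x y = (\<Sum>k\<le>n. hermite_fun k x * hermite_fun k y)"

definition sine_kernel :: "real \<Rightarrow> real \<Rightarrow> real \<Rightarrow> real" where
  "sine_kernel N x y = (if x = y then N / pi else sin (N * (x - y)) / (pi * (x - y)))"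

end

theory Submission
  imports Defs
begin

text \<open>
  The argument is elementary ODE analysis.  (1) The Rodrigues polynomials satisfy the usual
  three-term recurrence, hence so do the Hermite functions h_n, together with the ladder
  relation h_n' = x h_n - sqrt(2(n+1)) h_(n+1) and the Weber equation
  h_n'' = (x^2 - L^2) h_n, L^2 = 2n + 1.  (2) The Christoffel--Darboux formula writes k_n
  through h_n and h_n' only.  (3) For any solution f of f'' = (t^2 - L^2) f, the energy
  E(t) = f'(t)^2 + (L^2 - t^2) f(t)^2 is maximal at 0 and nearly constant on [-T, T]
  when 4 T^2 \<le> L^2; in rotated coordinates f behaves like a sinusoid of frequency L, which
  gives both an off-diagonal and an on-diagonal estimate in terms of E(0) (locale
  hermite_ode).  (4) At the origin h_n is given by central binomial ratios, and Wallis'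
  product yields E(0) = 2L/pi + O(1/L).  The theorem combines (2)--(4), noting that the
  frequency N of the statement is within 1/(2L) of L.
\<close>

text \<open>Hermite polynomials by their three-term recurrence; they coincide with the Rodrigues
  definition hermite_poly (lemma hermite_poly_eq_rec).\<close>

fun hermite_rec :: "nat \<Rightarrow> real \<Rightarrow> real" where
  "hermite_rec 0 x = 1"
| "hermite_rec (Suc 0) x = 2 * x"
| "hermite_rec (Suc (Suc n)) x = 2 * x * hermite_rec (Suc n) x - 2 * real (Suc n) * hermite_rec n x"

lemma hermite_rec_Suc:
  "hermite_rec (Suc n) x = 2 * x * hermite_rec n x - 2 * real n * hermite_rec (n - 1) x"
  by (cases n) auto

text \<open>Appell property H_n' = 2n H_(n-1), proved together with the next index by induction.\<close>

lemma has_deriv_hermite_rec: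
  "(hermite_rec n has_real_derivative 2 * real n * hermite_rec (n - 1) x) (at x)"
proof -
  have "(hermite_rec n has_real_derivative 2 * real n * hermite_rec (n - 1) x) (at x) \<and>
        (hermite_rec (Suc n) has_real_derivative 2 * real (Suc n) * hermite_rec n x) (at x)" for x
  proof (induction n arbitrary: x)
    case 0
    show ?case by (auto intro!: derivative_eq_intros)
  next
    case (Suc n)
    have eq: "hermite_rec (Suc (Suc n))
        = (\<lambda>t. 2 * t * hermite_rec (Suc n) t - 2 * real (Suc n) * hermite_rec n t)"
      by (rule ext) simp
    have "(hermite_rec (Suc (Suc n)) has_real_derivative
            2 * hermite_rec (Suc n) x + 2 * x * (2 * real (Suc n) * hermite_rec n x)
            - 2 * real (Suc n) * (2 * real n * hermite_rec (n - 1) x)) (at x)"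
      unfolding eq using Suc.IH
      by (auto intro!: derivative_eq_intros)
    moreover have "2 * hermite_rec (Suc n) x + 2 * x * (2 * real (Suc n) * hermite_rec n x)
            - 2 * real (Suc n) * (2 * real n * hermite_rec (n - 1) x)
          = 2 * real (Suc (Suc n)) * hermite_rec (Suc n) x"
      by (simp add: hermite_rec_Suc algebra_simps)
    ultimately have "(hermite_rec (Suc (Suc n)) has_real_derivative
        2 * real (Suc (Suc n)) * hermite_rec (Suc n) x) (at x)"
      by (simp only:)
    with Suc.IH show ?case by (simp del: hermite_rec.simps)
  qed
  then show ?thesis by blast
qed

lemma deriv_iterate_gaussian:
  "(deriv ^^ n) (\<lambda>t. exp (- t\<^sup>2)) = (\<lambda>x. (-1) ^ n * hermite_rec n x * exp (- x\<^sup>2))"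
proof (induction n)
  case 0
  then show ?case by simp
next
  case (Suc n)
  have "((\<lambda>x. (-1) ^ n * hermite_rec n x * exp (- x\<^sup>2)) has_real_derivative
          (-1) ^ Suc n * hermite_rec (Suc n) x * exp (- x\<^sup>2)) (at x)" for x
    by (rule derivative_eq_intros has_deriv_hermite_rec refl
        | simp add: hermite_rec_Suc algebra_simps)+
  then show ?case using Suc by (auto intro!: ext DERIV_imp_deriv)
qed

lemma hermite_poly_eq_rec: "hermite_poly n x = hermite_rec n x"
proof -
  have "hermite_poly n x = ((-1)^n * (-1)^n) * (exp (x\<^sup>2) * exp (- x\<^sup>2)) * hermite_rec n x"
    by (simp add: hermite_poly_def deriv_iterate_gaussian algebra_simps)
  then show ?thesis by (simp flip: power_add exp_add)
qed

definition hermite_const :: "nat \<Rightarrow> real" where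
  "hermite_const n = pi powr (1/4) * sqrt (2 ^ n * fact n)"

definition hcoef :: "nat \<Rightarrow> real" where
  "hcoef n = sqrt ((real n + 1) / 2)"

lemma hcoef_pos: "hcoef n > 0"
  by (simp add: hcoef_def)

lemma hcoef_sq: "(hcoef n)\<^sup>2 = (real n + 1) / 2"
  by (simp add: hcoef_def)

lemma hermite_const_pos: "hermite_const n > 0"
  by (simp add: hermite_const_def)

lemma hermite_const_Suc: "hermite_const (Suc n) = 2 * hcoef n * hermite_const n"
proof -
  have "sqrt (2 ^ Suc n * fact (Suc n)) = sqrt (4 * ((real n + 1) / 2)) * sqrt (2 ^ n * fact n)"
    by (simp add: real_sqrt_mult[symmetric] algebra_simps)
  also have "sqrt (4 * ((real n + 1) / 2)) = 2 * hcoef n"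
    by (subst real_sqrt_mult) (simp add: hcoef_def)
  finally show ?thesis by (simp add: hermite_const_def)
qed

lemma hermite_fun_eq: "hermite_fun n x = hermite_rec n x * exp (- x\<^sup>2 / 2) / hermite_const n"
  by (simp add: hermite_fun_def hermite_poly_eq_rec hermite_const_def)

lemma hermite_fun_1: "hcoef 0 * hermite_fun 1 x = x * hermite_fun 0 x"
  using hermite_const_Suc[of 0] hcoef_pos[of 0] hermite_const_pos[of 0]
  by (simp add: hermite_fun_eq field_simps)

lemma hermite_fun_rec:
  "hcoef (Suc n) * hermite_fun (Suc (Suc n)) x = x * hermite_fun (Suc n) x - hcoef n * hermite_fun n x"
proof -
  have c: "hermite_const (Suc (Suc n)) = 2 * hcoef (Suc n) * (2 * hcoef n * hermite_const n)"
    by (simp add: hermite_const_Suc)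
  have s: "real (Suc n) = 2 * (hcoef n)\<^sup>2"
    using hcoef_sq[of n] by simp
  show ?thesis
    unfolding hermite_fun_eq c hermite_const_Suc hermite_rec.simps s
    using hcoef_pos[of n] hcoef_pos[of "Suc n"] hermite_const_pos[of n]
    by (simp add: field_simps power2_eq_square)
qed

definition hermite_fun_deriv :: "nat \<Rightarrow> real \<Rightarrow> real" where
  "hermite_fun_deriv n x = x * hermite_fun n x - 2 * hcoef n * hermite_fun (Suc n) x"

lemma has_deriv_hermite_fun:
  "(hermite_fun n has_real_derivative hermite_fun_deriv n x) (at x)"
proof -
  have eq: "hermite_fun n = (\<lambda>t. hermite_rec n t * exp (- t\<^sup>2 / 2) / hermite_const n)"
    by (rule ext) (simp add: hermite_fun_eq)
  have "(hermite_fun n has_real_derivative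
          (2 * real n * hermite_rec (n - 1) x * exp (- x\<^sup>2 / 2)
           + hermite_rec n x * (exp (- x\<^sup>2 / 2) * (- x))) / hermite_const n) (at x)"
    unfolding eq using hermite_const_pos[of n]
    by (auto intro!: derivative_eq_intros has_deriv_hermite_rec simp: power2_eq_square)
  moreover have "(2 * real n * hermite_rec (n - 1) x * exp (- x\<^sup>2 / 2)
           + hermite_rec n x * (exp (- x\<^sup>2 / 2) * (- x))) / hermite_const n
      = hermite_fun_deriv n x"
    using hermite_const_pos[of n] hcoef_pos[of n] unfolding hermite_fun_deriv_def
    by (simp add: hermite_fun_eq hermite_const_Suc hermite_rec_Suc field_simps)
  ultimately show ?thesis by simp
qed

lemma has_deriv_hermite_fun_deriv:
  "(hermite_fun_deriv n has_real_derivative (x\<^sup>2 - (2 * real n + 1)) * hermite_fun n x) (at x)"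
proof -
  have eq: "hermite_fun_deriv n
      = (\<lambda>t. t * hermite_fun n t - 2 * hcoef n * hermite_fun (Suc n) t)"
    by (rule ext) (simp add: hermite_fun_deriv_def)
  define D where "D = hermite_fun n x + x * (x * hermite_fun n x - 2 * hcoef n * hermite_fun (Suc n) x)
      - 2 * hcoef n * hermite_fun_deriv (Suc n) x"
  have "(hermite_fun_deriv n has_real_derivative D) (at x)"
    unfolding eq D_def
    by (rule derivative_eq_intros has_deriv_hermite_fun refl | simp add: hermite_fun_deriv_def)+
  moreover have "D = (x\<^sup>2 - (2 * real n + 1)) * hermite_fun n x"
  proof -
    have "D = hermite_fun n x + x * (x * hermite_fun n x - 2 * hcoef n * hermite_fun (Suc n) x)
          - 2 * hcoef n * (x * hermite_fun (Suc n) x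
          - 2 * (hcoef (Suc n) * hermite_fun (Suc (Suc n)) x))"
      unfolding D_def hermite_fun_deriv_def by simp
    also have "\<dots> = hermite_fun n x + x\<^sup>2 * hermite_fun n x - 4 * (hcoef n)\<^sup>2 * hermite_fun n x"
      unfolding hermite_fun_rec by (simp add: algebra_simps power2_eq_square)
    finally show ?thesis unfolding hcoef_sq by (simp add: field_simps)
  qed
  ultimately show ?thesis by simp
qed

lemma christoffel_darboux:
  "(x - y) * hermite_kernel n x y
     = hcoef n * (hermite_fun (Suc n) x * hermite_fun n y - hermite_fun n x * hermite_fun (Suc n) y)"
proof (induction n)
  case 0
  have "hcoef 0 * (hermite_fun 1 x * hermite_fun 0 y - hermite_fun 0 x * hermite_fun 1 y)
      = (hcoef 0 * hermite_fun 1 x) * hermite_fun 0 y - hermite_fun 0 x * (hcoef 0 * hermite_fun 1 y)"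
    by (simp add: algebra_simps)
  then show ?case unfolding hermite_fun_1 by (simp add: hermite_kernel_def algebra_simps)
next
  case (Suc n)
  have "hcoef (Suc n) * (hermite_fun (Suc (Suc n)) x * hermite_fun (Suc n) y
          - hermite_fun (Suc n) x * hermite_fun (Suc (Suc n)) y)
      = (hcoef (Suc n) * hermite_fun (Suc (Suc n)) x) * hermite_fun (Suc n) y
          - hermite_fun (Suc n) x * (hcoef (Suc n) * hermite_fun (Suc (Suc n)) y)"
    by (simp add: algebra_simps)
  also have "\<dots> = (x - y) * hermite_fun (Suc n) x * hermite_fun (Suc n) y
      + hcoef n * (hermite_fun (Suc n) x * hermite_fun n y - hermite_fun n x * hermite_fun (Suc n) y)"
    unfolding hermite_fun_rec by (simp add: algebra_simps)
  also have "\<dots> = (x - y) * hermite_kernel (Suc n) x y"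
    using Suc by (simp add: hermite_kernel_def algebra_simps)
  finally show ?case by simp
qed

lemma hermite_kernel_off_diag:
  assumes "x \<noteq> y"
  shows "hermite_kernel n x y = hermite_fun n x * hermite_fun n y / 2
     + (hermite_fun n x * hermite_fun_deriv n y - hermite_fun_deriv n x * hermite_fun n y) / (2 * (x - y))"
proof -
  have s: "hcoef n * hermite_fun (Suc n) t = (t * hermite_fun n t - hermite_fun_deriv n t) / 2" for t
    by (simp add: hermite_fun_deriv_def)
  have "(x - y) * hermite_kernel n x y
      = (hcoef n * hermite_fun (Suc n) x) * hermite_fun n y - hermite_fun n x * (hcoef n * hermite_fun (Suc n) y)"
    unfolding christoffel_darboux by (simp add: algebra_simps)
  also have "\<dots> = ((x - y) * hermite_fun n x * hermite_fun n y
      + (hermite_fun n x * hermite_fun_deriv n y - hermite_fun_deriv n x * hermite_fun n y)) / 2"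
    unfolding s by (simp add: field_simps)
  finally show ?thesis
    using assms by (simp add: field_simps)
qed

text \<open>Diagonal value of the kernel: differentiate the Christoffel--Darboux formula at x = y.\<close>

lemma hermite_kernel_diag:
  "hermite_kernel n y y = ((hermite_fun n y)\<^sup>2 + (hermite_fun_deriv n y)\<^sup>2
      + (2 * real n + 1 - y\<^sup>2) * (hermite_fun n y)\<^sup>2) / 2"
proof -
  define K where "K t = hermite_kernel n t y" for t
  have "(K has_real_derivative (\<Sum>k\<le>n. hermite_fun_deriv k y * hermite_fun k y)) (at y)"
    unfolding K_def[abs_def] hermite_kernel_def
    by (rule DERIV_sum) (rule DERIV_cmult_right[OF has_deriv_hermite_fun])
  then have dF1: "((\<lambda>t. (t - y) * K t) has_real_derivative K y) (at y)"
    by (auto intro!: derivative_eq_intros)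
  have eF: "(\<lambda>t. (t - y) * K t) = (\<lambda>t. hcoef n
      * (hermite_fun (Suc n) t * hermite_fun n y - hermite_fun n t * hermite_fun (Suc n) y))"
    by (rule ext) (simp add: K_def christoffel_darboux)
  have dF2: "((\<lambda>t. (t - y) * K t) has_real_derivative hcoef n * (hermite_fun_deriv (Suc n) y
      * hermite_fun n y - hermite_fun_deriv n y * hermite_fun (Suc n) y)) (at y)"
    unfolding eF by (rule derivative_eq_intros has_deriv_hermite_fun refl | simp)+
  define A where "A = hermite_fun n y"
  define B where "B = hermite_fun (Suc n) y"
  define s where "s = hcoef n"
  have hD: "hermite_fun_deriv n y = y * A - 2 * s * B"
    unfolding A_def B_def s_def by (simp add: hermite_fun_deriv_def)
  have hD1: "hermite_fun_deriv (Suc n) y = y * B - 2 * (y * B - s * A)"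
    unfolding A_def B_def s_def hermite_fun_deriv_def mult.assoc[of 2] hermite_fun_rec ..
  have ss: "s * s = (real n + 1) / 2"
    unfolding s_def using hcoef_sq[of n] by (simp add: power2_eq_square)
  have "K y = s * (hermite_fun_deriv (Suc n) y * A - hermite_fun_deriv n y * B)"
    unfolding DERIV_unique[OF dF1 dF2] s_def A_def B_def ..
  also have "\<dots> = 2 * (s * s) * A\<^sup>2 + 2 * (s * s) * B\<^sup>2 - 2 * s * y * A * B"
    unfolding hD1 hD by (simp add: algebra_simps power2_eq_square)
  also have "\<dots> = (A\<^sup>2 + (hermite_fun_deriv n y)\<^sup>2 + (2 * real n + 1 - y\<^sup>2) * A\<^sup>2) / 2
      + (2 * (s * s) - (real n + 1)) * A\<^sup>2"
    unfolding hD by (simp add: field_simps power2_eq_square)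
  also have "\<dots> = (A\<^sup>2 + (hermite_fun_deriv n y)\<^sup>2 + (2 * real n + 1 - y\<^sup>2) * A\<^sup>2) / 2"
    unfolding ss by (simp add: field_simps)
  finally show ?thesis unfolding K_def A_def .
qed

lemma abs_comb_le: "\<bar>s\<bar> \<le> 1 \<Longrightarrow> \<bar>c\<bar> \<le> 1 \<Longrightarrow> \<bar>p * s + q * c\<bar> \<le> \<bar>p\<bar> + \<bar>q\<bar>"
  for p q s c :: real
proof -
  assume "\<bar>s\<bar> \<le> 1" "\<bar>c\<bar> \<le> 1"
  then have "\<bar>p * s\<bar> \<le> \<bar>p\<bar>" "\<bar>q * c\<bar> \<le> \<bar>q\<bar>"
    by (auto simp: abs_mult intro: mult_left_le)
  then show ?thesis by linarith
qed

lemma sin_lipschitz: "\<bar>sin a - sin b\<bar> \<le> \<bar>a - b\<bar>" for a b :: real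
proof -
  have "norm (sin a - sin b) \<le> 1 * norm (a - b)"
    by (rule field_differentiable_bound[where S = UNIV and f' = cos])
      (auto intro!: derivative_eq_intros)
  then show ?thesis by simp
qed

lemma square_le_square: "\<bar>t\<bar> \<le> T \<Longrightarrow> t\<^sup>2 \<le> (T::real)\<^sup>2"
  by (metis abs_ge_zero order_trans power2_abs power_mono)

text \<open>A solution f of f'' = (t^2 - L^2) f, written as the first-order system f' = g,
  g' = (t^2 - L^2) f.  The Hermite function h_n is such a solution with L^2 = 2n + 1.\<close>

locale hermite_ode =
  fixes f g :: "real \<Rightarrow> real" and L :: real
  assumes f_deriv: "\<And>t. (f has_real_derivative g t) (at t)"
    and g_deriv: "\<And>t. (g has_real_derivative (t\<^sup>2 - L\<^sup>2) * f t) (at t)"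
begin

text \<open>Energy of the oscillation; L^2 - t^2 plays the role of a time-dependent stiffness.\<close>

definition energy :: "real \<Rightarrow> real" where
  "energy t = (g t)\<^sup>2 + (L\<^sup>2 - t\<^sup>2) * (f t)\<^sup>2"

lemma energy0_nonneg: "energy 0 \<ge> 0"
  by (simp add: energy_def)

lemma energy_deriv: "(energy has_real_derivative - 2 * t * (f t)\<^sup>2) (at t)"
  unfolding energy_def[abs_def]
  by (rule derivative_eq_intros f_deriv g_deriv refl | simp add: power2_eq_square algebra_simps)+

text \<open>Since E' = -2 t f^2, the energy is maximal at the origin.\<close>

lemma energy_le_energy0: "energy t \<le> energy 0"
proof (cases "t \<ge> 0")
  case True
  have "\<exists>D. (energy has_real_derivative D) (at s) \<and> D \<le> 0" if "0 \<le> s" for s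
    using energy_deriv that by (intro exI conjI) (auto simp: mult_nonneg_nonneg)
  then show ?thesis using DERIV_nonpos_imp_nonincreasing[OF True] by blast
next
  case False
  have "\<exists>D. (energy has_real_derivative D) (at s) \<and> D \<ge> 0" if "s \<le> 0" for s
    using energy_deriv that by (intro exI conjI) (auto simp: mult_nonpos_nonneg)
  then show ?thesis using DERIV_nonneg_imp_nondecreasing[of t 0] False by auto
qed

text \<open>The quotient energy / (L^2 - t^2) grows with |t| inside the turning points, which
  bounds the loss of energy from below.\<close>

lemma energy_lower_bound:
  assumes "t\<^sup>2 < L\<^sup>2"
  shows "energy 0 * (L\<^sup>2 - t\<^sup>2) \<le> energy t * L\<^sup>2"
proof -
  define G where "G s = energy s / (L\<^sup>2 - s\<^sup>2)" for s
  have G_deriv: "(G has_real_derivative 2 * s * (g s)\<^sup>2 / (L\<^sup>2 - s\<^sup>2)\<^sup>2) (at s)"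
    if "s\<^sup>2 < L\<^sup>2" for s
  proof -
    have "(G has_real_derivative ((- 2 * s * (f s)\<^sup>2) * (L\<^sup>2 - s\<^sup>2) - energy s * (- (2 * s)))
        / (L\<^sup>2 - s\<^sup>2)\<^sup>2) (at s)"
      unfolding G_def[abs_def] using that
      by (auto intro!: derivative_eq_intros energy_deriv simp: power2_eq_square)
    moreover have "(- 2 * s * (f s)\<^sup>2) * (L\<^sup>2 - s\<^sup>2) - energy s * (- (2 * s)) = 2 * s * (g s)\<^sup>2"
      by (simp add: energy_def algebra_simps)
    ultimately show ?thesis by simp
  qed
  have inside: "s\<^sup>2 < L\<^sup>2" if "\<bar>s\<bar> \<le> \<bar>t\<bar>" for s
    using assms that by (meson abs_le_square_iff le_less_trans)
  have "G 0 \<le> G t"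
  proof (cases "t \<ge> 0")
    case True
    have "\<exists>D. (G has_real_derivative D) (at s) \<and> D \<ge> 0" if "0 \<le> s" "s \<le> t" for s
      using G_deriv[OF inside, of s] that
      by (intro exI[of _ "2 * s * (g s)\<^sup>2 / (L\<^sup>2 - s\<^sup>2)\<^sup>2"] conjI) auto
    then show ?thesis using DERIV_nonneg_imp_nondecreasing[OF True] by blast
  next
    case False
    have "\<exists>D. (G has_real_derivative D) (at s) \<and> D \<le> 0" if "t \<le> s" "s \<le> 0" for s
      using G_deriv[OF inside, of s] that False
      by (intro exI[of _ "2 * s * (g s)\<^sup>2 / (L\<^sup>2 - s\<^sup>2)\<^sup>2"] conjI) (auto simp: mult_nonpos_nonneg divide_nonpos_nonneg)
    then show ?thesis using DERIV_nonpos_imp_nonincreasing[of t 0] False by auto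
  qed
  moreover have "L\<^sup>2 > 0"
    using assms by (smt (verit) zero_le_power2)
  ultimately show ?thesis
    using assms unfolding G_def by (simp add: field_simps)
qed

text \<open>Rotated coordinates: for the constant-coefficient equation f'' = -L^2 f the pair
  below would be constant; here it varies only through the small term t^2 f.\<close>

definition rot_c :: "real \<Rightarrow> real" where
  "rot_c t = L * f t * cos (L * t) - g t * sin (L * t)"

definition rot_s :: "real \<Rightarrow> real" where
  "rot_s t = L * f t * sin (L * t) + g t * cos (L * t)"

lemma rot_c_deriv: "(rot_c has_real_derivative - (t\<^sup>2 * f t * sin (L * t))) (at t)"
  unfolding rot_c_def[abs_def]
  by (rule derivative_eq_intros f_deriv g_deriv refl | simp add: algebra_simps power2_eq_square)+

lemma rot_s_deriv: "(rot_s has_real_derivative t\<^sup>2 * f t * cos (L * t)) (at t)"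
  unfolding rot_s_def[abs_def]
  by (rule derivative_eq_intros f_deriv g_deriv refl | simp add: algebra_simps power2_eq_square)+

lemma rot_norm: "(rot_c x)\<^sup>2 + (rot_s x)\<^sup>2 = L\<^sup>2 * (f x)\<^sup>2 + (g x)\<^sup>2"
proof -
  have "(L * a * c - b * s)\<^sup>2 + (L * a * s + b * c)\<^sup>2 = (L\<^sup>2 * a\<^sup>2 + b\<^sup>2) * (s\<^sup>2 + c\<^sup>2)"
    for a b c s :: real
    by (simp add: algebra_simps power2_eq_square)
  then show ?thesis
    unfolding rot_c_def rot_s_def by simp
qed

definition phase_remainder :: "real \<Rightarrow> real \<Rightarrow> real" where
  "phase_remainder x y =
     (rot_c x * (rot_c y - rot_c x) + rot_s x * (rot_s y - rot_s x)) * sin (L * (x - y))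
   + (rot_c x * (rot_s y - rot_s x) - rot_s x * (rot_c y - rot_c x)) * cos (L * (x - y))"

lemma phase_identity:
  "L * (f x * g y - g x * f y)
     = (L\<^sup>2 * (f x)\<^sup>2 + (g x)\<^sup>2) * sin (L * (x - y)) + phase_remainder x y"
proof -
  define sd where "sd = sin (L * (x - y))"
  define cd where "cd = cos (L * (x - y))"
  have sd: "sd = sin (L * x) * cos (L * y) - cos (L * x) * sin (L * y)"
    unfolding sd_def by (simp add: right_diff_distrib sin_diff)
  have cd: "cd = cos (L * x) * cos (L * y) + sin (L * x) * sin (L * y)"
    unfolding cd_def by (simp add: right_diff_distrib cos_diff)
  define P where "P = L\<^sup>2 * f x * f y + g x * g y"
  define Q where "Q = L * (f x * g y - g x * f y)"
  have k1: "rot_c x * rot_c y + rot_s x * rot_s y = P * cd + Q * sd"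
    unfolding sd cd rot_c_def rot_s_def P_def Q_def by (simp add: algebra_simps power2_eq_square)
  have k2: "rot_c x * rot_s y - rot_s x * rot_c y = - P * sd + Q * cd"
    unfolding sd cd rot_c_def rot_s_def P_def Q_def by (simp add: algebra_simps power2_eq_square)
  have pyth: "cd * cd = 1 - sd * sd"
    unfolding sd_def cd_def by (simp add: cos_squared_eq[unfolded power2_eq_square])
  have "phase_remainder x y = (rot_c x * rot_c y + rot_s x * rot_s y) * sd
      + (rot_c x * rot_s y - rot_s x * rot_c y) * cd - ((rot_c x)\<^sup>2 + (rot_s x)\<^sup>2) * sd"
    unfolding phase_remainder_def sd_def cd_def by (simp add: algebra_simps power2_eq_square)
  also have "\<dots> = Q - (L\<^sup>2 * (f x)\<^sup>2 + (g x)\<^sup>2) * sd"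
    unfolding k1 k2 rot_norm by (simp add: algebra_simps pyth)
  finally show ?thesis unfolding Q_def sd_def by simp
qed

context
  fixes T :: real
  assumes TL: "4 * T\<^sup>2 \<le> L\<^sup>2" and L_pos: "L > 0"
begin

lemma f_sq_bound:
  assumes "\<bar>t\<bar> \<le> T"
  shows "(f t)\<^sup>2 \<le> 4/3 * energy 0 / L\<^sup>2"
proof -
  have "3/4 * L\<^sup>2 \<le> L\<^sup>2 - t\<^sup>2"
    using square_le_square[OF assms] TL by simp
  then have "3/4 * L\<^sup>2 * (f t)\<^sup>2 \<le> (L\<^sup>2 - t\<^sup>2) * (f t)\<^sup>2"
    by (rule mult_right_mono) simp
  also have "\<dots> \<le> energy t"
    by (simp add: energy_def)
  also have "\<dots> \<le> energy 0"
    by (rule energy_le_energy0)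
  finally show ?thesis
    using L_pos by (simp add: field_simps)
qed

lemma f_abs_bound:
  assumes "\<bar>t\<bar> \<le> T"
  shows "\<bar>f t\<bar> \<le> 6/5 * sqrt (energy 0) / L"
proof -
  note E0 = energy0_nonneg
  have "(f t)\<^sup>2 \<le> 36/25 * energy 0 / L\<^sup>2"
    using E0 by (intro order_trans[OF f_sq_bound[OF assms]] divide_right_mono mult_right_mono) auto
  also have "\<dots> = (6/5 * sqrt (energy 0) / L)\<^sup>2"
    using E0 by (simp add: power_divide power_mult_distrib)
  finally show ?thesis
    using L_pos E0 by (intro power2_le_imp_le[of "\<bar>f t\<bar>", unfolded power2_abs]) simp_all
qed

lemma g_abs_bound:
  assumes "\<bar>t\<bar> \<le> T"
  shows "\<bar>g t\<bar> \<le> sqrt (energy 0)"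
proof -
  have "L\<^sup>2 - t\<^sup>2 \<ge> 0"
    using square_le_square[OF assms] TL zero_le_power2[of T] by linarith
  then have "(g t)\<^sup>2 \<le> energy t"
    by (simp add: energy_def)
  then have "(g t)\<^sup>2 \<le> energy 0"
    using energy_le_energy0[of t] by linarith
  then show ?thesis
    using real_le_rsqrt by (simp add: real_sqrt_abs[symmetric] del: real_sqrt_abs)
qed

lemma energy_variation:
  assumes "\<bar>t\<bar> \<le> T"
  shows "\<bar>energy t - energy 0\<bar> \<le> energy 0 * T\<^sup>2 / L\<^sup>2"
proof -
  have tT: "t\<^sup>2 \<le> T\<^sup>2"
    by (rule square_le_square[OF assms])
  have "t\<^sup>2 < L\<^sup>2"
    using tT TL zero_le_power2[of T] L_pos by (smt (verit) zero_less_power)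
  then have "energy 0 - energy t \<le> energy 0 * t\<^sup>2 / L\<^sup>2"
    using energy_lower_bound[of t] L_pos by (simp add: field_simps)
  also have "\<dots> \<le> energy 0 * T\<^sup>2 / L\<^sup>2"
    using tT energy0_nonneg by (intro divide_right_mono mult_left_mono) simp_all
  finally show ?thesis
    using energy_le_energy0[of t] by simp
qed

text \<open>The rotated coordinates vary slowly, since their derivatives are t^2 f times a sine.\<close>

lemma rot_lipschitz:
  assumes "\<bar>x\<bar> \<le> T" "\<bar>y\<bar> \<le> T"
  shows "\<bar>rot_c y - rot_c x\<bar> \<le> T\<^sup>2 * (6/5 * sqrt (energy 0) / L) * \<bar>y - x\<bar>"
    and "\<bar>rot_s y - rot_s x\<bar> \<le> T\<^sup>2 * (6/5 * sqrt (energy 0) / L) * \<bar>y - x\<bar>"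
proof -
  define B where "B = T\<^sup>2 * (6/5 * sqrt (energy 0) / L)"
  have small: "\<bar>t\<^sup>2 * f t * w\<bar> \<le> B" if "t \<in> {-T..T}" "\<bar>w\<bar> \<le> 1" for t w
  proof -
    have "\<bar>t\<^sup>2 * f t * w\<bar> \<le> t\<^sup>2 * \<bar>f t\<bar>"
      using that(2) by (simp add: abs_mult mult_left_le)
    also have "\<dots> \<le> B"
      unfolding B_def using that(1) by (intro mult_mono square_le_square f_abs_bound) auto
    finally show ?thesis .
  qed
  have xy: "x \<in> {-T..T}" "y \<in> {-T..T}"
    using assms by auto
  have "\<bar>rot_c y - rot_c x\<bar> \<le> B * \<bar>y - x\<bar>"
    by (rule field_differentiable_bound[OF convex_real_interval(5)
        has_field_derivative_at_within[OF rot_c_deriv] _ xy(2) xy(1), unfolded real_norm_def])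
      (simp add: small)
  moreover have "\<bar>rot_s y - rot_s x\<bar> \<le> B * \<bar>y - x\<bar>"
    by (rule field_differentiable_bound[OF convex_real_interval(5)
        has_field_derivative_at_within[OF rot_s_deriv] _ xy(2) xy(1), unfolded real_norm_def])
      (simp add: small)
  ultimately show "\<bar>rot_c y - rot_c x\<bar> \<le> T\<^sup>2 * (6/5 * sqrt (energy 0) / L) * \<bar>y - x\<bar>"
    and "\<bar>rot_s y - rot_s x\<bar> \<le> T\<^sup>2 * (6/5 * sqrt (energy 0) / L) * \<bar>y - x\<bar>"
    unfolding B_def by simp_all
qed

lemma rot_bound:
  assumes "\<bar>x\<bar> \<le> T"
  shows "\<bar>rot_c x\<bar> \<le> 11/5 * sqrt (energy 0)" and "\<bar>rot_s x\<bar> \<le> 11/5 * sqrt (energy 0)"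
proof -
  have Lf: "\<bar>L * f x\<bar> \<le> 6/5 * sqrt (energy 0)"
    using f_abs_bound[OF assms] L_pos by (simp add: abs_mult field_simps)
  have "\<bar>rot_c x\<bar> \<le> \<bar>L * f x\<bar> + \<bar>- g x\<bar>"
    unfolding rot_c_def using abs_comb_le[of "cos (L * x)" "sin (L * x)" "L * f x" "- g x"]
    by (simp add: algebra_simps)
  then show "\<bar>rot_c x\<bar> \<le> 11/5 * sqrt (energy 0)"
    using Lf g_abs_bound[OF assms] by simp
  have "\<bar>rot_s x\<bar> \<le> \<bar>L * f x\<bar> + \<bar>g x\<bar>"
    unfolding rot_s_def using abs_comb_le[of "sin (L * x)" "cos (L * x)" "L * f x" "g x"]
    by (simp add: algebra_simps)
  then show "\<bar>rot_s x\<bar> \<le> 11/5 * sqrt (energy 0)"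
    using Lf g_abs_bound[OF assms] by simp
qed

lemma phase_remainder_bound:
  assumes x: "\<bar>x\<bar> \<le> T" and y: "\<bar>y\<bar> \<le> T"
  shows "\<bar>phase_remainder x y\<bar> \<le> 264/25 * energy 0 * T\<^sup>2 * \<bar>x - y\<bar> / L"
proof -
  define r where "r = 11/5 * sqrt (energy 0)"
  define \<delta> where "\<delta> = T\<^sup>2 * (6/5 * sqrt (energy 0) / L) * \<bar>x - y\<bar>"
  have r: "\<bar>rot_c x\<bar> \<le> r" "\<bar>rot_s x\<bar> \<le> r" "0 \<le> r"
    using rot_bound[OF x] energy0_nonneg by (simp_all add: r_def)
  have \<delta>: "\<bar>rot_c y - rot_c x\<bar> \<le> \<delta>" "\<bar>rot_s y - rot_s x\<bar> \<le> \<delta>"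
    using rot_lipschitz[OF x y] by (simp_all add: \<delta>_def abs_minus_commute)
  have prod: "\<bar>u * v\<bar> \<le> r * \<delta>" if "\<bar>u\<bar> \<le> r" "\<bar>v\<bar> \<le> \<delta>" for u v
    unfolding abs_mult using that r(3) by (intro mult_mono) auto
  have "\<bar>phase_remainder x y\<bar>
      \<le> \<bar>rot_c x * (rot_c y - rot_c x) + rot_s x * (rot_s y - rot_s x)\<bar>
       + \<bar>rot_c x * (rot_s y - rot_s x) - rot_s x * (rot_c y - rot_c x)\<bar>"
    unfolding phase_remainder_def by (rule abs_comb_le) auto
  also have "\<dots> \<le> 4 * (r * \<delta>)"
    using prod[OF r(1) \<delta>(1)] prod[OF r(2) \<delta>(2)] prod[OF r(1) \<delta>(2)] prod[OF r(2) \<delta>(1)]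
    by (smt (verit, best) abs_triangle_ineq abs_triangle_ineq4)
  also have "\<dots> = 264/25 * energy 0 * T\<^sup>2 * \<bar>x - y\<bar> / L"
    unfolding r_def \<delta>_def using energy0_nonneg by simp
  finally show ?thesis .
qed

lemma sine_approx:
  assumes "\<bar>x\<bar> \<le> T" and "\<bar>y\<bar> \<le> T"
  shows "\<bar>L * (f x * g y - g x * f y) - (L\<^sup>2 * (f x)\<^sup>2 + (g x)\<^sup>2) * sin (L * (x - y))\<bar>
         \<le> 264/25 * energy 0 * T\<^sup>2 * \<bar>x - y\<bar> / L"
  using phase_remainder_bound[OF assms] unfolding phase_identity by simp

context
  fixes N :: real
  assumes T_ge: "T \<ge> 2"
    and energy0_approx: "\<bar>energy 0 - 2 / pi * L\<bar> \<le> 2 / L"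
    and energy0_upper: "energy 0 \<le> 4/5 * L"
    and N_close: "0 \<le> N - L" "N - L \<le> 1 / (2 * L)"
begin

lemma error_scales:
  shows "energy 0 / L\<^sup>2 \<le> 1/5 * (T\<^sup>2 / L)"
    and "energy 0 * T\<^sup>2 / L\<^sup>2 \<le> 4/5 * (T\<^sup>2 / L)"
    and "1 / L \<le> 1/4 * (T\<^sup>2 / L)"
proof -
  have T4: "4 \<le> T\<^sup>2"
    using T_ge square_le_square[of 2 T] by simp
  have EL: "energy 0 / L\<^sup>2 \<le> 4/5 * (1 / L)"
    using energy0_upper L_pos by (simp add: field_simps power2_eq_square)
  then show "energy 0 * T\<^sup>2 / L\<^sup>2 \<le> 4/5 * (T\<^sup>2 / L)"
    using mult_right_mono[OF EL, of "T\<^sup>2"] by simp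
  show "1 / L \<le> 1/4 * (T\<^sup>2 / L)"
    using T4 L_pos by (simp add: field_simps)
  then show "energy 0 / L\<^sup>2 \<le> 1/5 * (T\<^sup>2 / L)"
    using EL by linarith
qed

lemma amplitude_approx:
  assumes "\<bar>x\<bar> \<le> T"
  shows "\<bar>(L\<^sup>2 * (f x)\<^sup>2 + (g x)\<^sup>2) / L - 2 / pi\<bar> \<le> 7/3 * (energy 0 * T\<^sup>2 / L\<^sup>2) / L + 2 / L / L"
proof -
  define X where "X = energy 0 * T\<^sup>2 / L\<^sup>2"
  have "L\<^sup>2 * (f x)\<^sup>2 + (g x)\<^sup>2 = energy x + x\<^sup>2 * (f x)\<^sup>2"
    by (simp add: energy_def algebra_simps)
  moreover have "x\<^sup>2 * (f x)\<^sup>2 \<le> T\<^sup>2 * (4/3 * energy 0 / L\<^sup>2)"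
    using assms by (intro mult_mono square_le_square f_sq_bound) auto
  moreover have "T\<^sup>2 * (4/3 * energy 0 / L\<^sup>2) = 4/3 * X"
    unfolding X_def by simp
  moreover have "0 \<le> x\<^sup>2 * (f x)\<^sup>2"
    by simp
  ultimately have "\<bar>(L\<^sup>2 * (f x)\<^sup>2 + (g x)\<^sup>2) - energy 0\<bar> \<le> 7/3 * X"
    using energy_variation[OF assms] unfolding X_def[symmetric] by linarith
  then have "\<bar>(L\<^sup>2 * (f x)\<^sup>2 + (g x)\<^sup>2) / L - energy 0 / L\<bar> \<le> 7/3 * X / L"
    using L_pos
    by (simp add: diff_divide_distrib[symmetric] abs_divide divide_right_mono
        del: times_divide_eq_left)
  moreover have "\<bar>energy 0 / L - 2 / pi\<bar> \<le> 2 / L / L"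
  proof -
    have "\<bar>energy 0 / L - 2 / pi\<bar> = \<bar>energy 0 - 2 / pi * L\<bar> / L"
      using L_pos by (simp add: field_simps abs_divide)
    then show ?thesis
      using divide_right_mono[OF energy0_approx, of L] L_pos by simp
  qed
  ultimately show ?thesis
    unfolding X_def by linarith
qed

text \<open>Off the diagonal, split the error into the product term, the amplitude error, the
  frequency error L vs N, and the phase remainder.\<close>

lemma off_diagonal_estimate:
  assumes x: "\<bar>x\<bar> \<le> T" and y: "\<bar>y\<bar> \<le> T" and xy: "x \<noteq> y"
  shows "\<bar>f x * f y / 2 + (f x * g y - g x * f y) / (2 * (x - y))
            - sin (N * (x - y)) / (pi * (x - y))\<bar> \<le> 17 * T\<^sup>2 / L"
proof -
  define d where "d = x - y"
  define A where "A = L\<^sup>2 * (f x)\<^sup>2 + (g x)\<^sup>2"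
  define t1 where "t1 = f x * f y / 2"
  define t2 where "t2 = (A / L - 2 / pi) * (sin (L * d) / (2 * d))"
  define t3 where "t3 = (sin (L * d) - sin (N * d)) / (pi * d)"
  define t4 where "t4 = (L * (f x * g y - g x * f y) - A * sin (L * d)) / (2 * L * d)"
  have d0: "d \<noteq> 0"
    using xy by (simp add: d_def)
  have "f x * f y / 2 + (f x * g y - g x * f y) / (2 * d) - sin (N * d) / (pi * d)
      = t1 + t2 + t3 + t4"
    unfolding t1_def t2_def t3_def t4_def using d0 L_pos by (simp add: field_simps)
  then have "\<bar>f x * f y / 2 + (f x * g y - g x * f y) / (2 * d) - sin (N * d) / (pi * d)\<bar>
      \<le> \<bar>t1\<bar> + \<bar>t2\<bar> + \<bar>t3\<bar> + \<bar>t4\<bar>"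
    by linarith
  also have "\<dots> \<le> 2/3 * (energy 0 / L\<^sup>2) + (7/6 * (energy 0 * T\<^sup>2 / L\<^sup>2) + 1 / L)
      + 1/4 * (1 / L) + 132/25 * (energy 0 * T\<^sup>2 / L\<^sup>2)"
  proof (intro add_mono)
    have "\<bar>f x * f y\<bar> \<le> ((f x)\<^sup>2 + (f y)\<^sup>2) / 2"
      using sum_squares_bound[of "\<bar>f x\<bar>" "\<bar>f y\<bar>"] by (simp add: abs_mult)
    also have "\<dots> \<le> 4/3 * energy 0 / L\<^sup>2"
      using f_sq_bound[OF x] f_sq_bound[OF y] by simp
    finally show "\<bar>t1\<bar> \<le> 2/3 * (energy 0 / L\<^sup>2)"
      unfolding t1_def by simp
    have sinc: "\<bar>sin (L * d) / (2 * d)\<bar> \<le> L / 2"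
      using abs_sin_x_le_abs_x[of "L * d"] d0 L_pos by (simp add: abs_divide abs_mult field_simps)
    have "\<bar>t2\<bar> \<le> (7/3 * (energy 0 * T\<^sup>2 / L\<^sup>2) / L + 2 / L / L) * (L / 2)"
      unfolding t2_def abs_mult A_def using amplitude_approx[OF x] sinc
      by (intro mult_mono) auto
    also have "\<dots> = 7/6 * (energy 0 * T\<^sup>2 / L\<^sup>2) + 1 / L"
      using L_pos by (simp add: field_simps power2_eq_square)
    finally show "\<bar>t2\<bar> \<le> 7/6 * (energy 0 * T\<^sup>2 / L\<^sup>2) + 1 / L" .
    have "\<bar>sin (L * d) - sin (N * d)\<bar> \<le> (N - L) * \<bar>d\<bar>"
      using sin_lipschitz[of "L * d" "N * d"] N_close by (simp add: left_diff_distrib[symmetric] abs_mult)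
    also have "\<dots> \<le> 1 / (2 * L) * \<bar>d\<bar>"
      by (rule mult_right_mono[OF N_close(2) abs_ge_zero])
    finally have s: "\<bar>sin (L * d) - sin (N * d)\<bar> \<le> 1 / (2 * L) * \<bar>d\<bar>" .
    have "\<bar>t3\<bar> = \<bar>sin (L * d) - sin (N * d)\<bar> / (pi * \<bar>d\<bar>)"
      unfolding t3_def by (simp add: abs_divide abs_mult)
    also have "\<dots> \<le> (1 / (2 * L) * \<bar>d\<bar>) / (2 * \<bar>d\<bar>)"
      using s pi_ge_two d0 by (intro frac_le mult_right_mono) auto
    finally show "\<bar>t3\<bar> \<le> 1/4 * (1 / L)"
      using d0 L_pos by (simp add: field_simps)
    have "\<bar>t4\<bar> = \<bar>L * (f x * g y - g x * f y) - A * sin (L * d)\<bar> / (2 * L * \<bar>d\<bar>)"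
      unfolding t4_def using L_pos by (simp add: abs_divide abs_mult)
    also have "\<dots> \<le> (264/25 * energy 0 * T\<^sup>2 * \<bar>d\<bar> / L) / (2 * L * \<bar>d\<bar>)"
      using sine_approx[OF x y] unfolding A_def d_def by (rule divide_right_mono) (use L_pos in simp)
    also have "\<dots> = 132/25 * (energy 0 * T\<^sup>2 / L\<^sup>2)"
      using d0 L_pos by (simp add: field_simps power2_eq_square)
    finally show "\<bar>t4\<bar> \<le> 132/25 * (energy 0 * T\<^sup>2 / L\<^sup>2)" .
  qed
  also have "\<dots> \<le> 17 * (T\<^sup>2 / L)"
  proof -
    have "2/3 * a + (7/6 * b + c) + 1/4 * c + 132/25 * b \<le> 17 * Y"
      if "a \<le> 1/5 * Y" "b \<le> 4/5 * Y" "c \<le> 1/4 * Y" "0 \<le> Y" for a b c Y :: real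
      using that by linarith
    then show ?thesis
      using error_scales divide_nonneg_pos[OF zero_le_power2[of T] L_pos] by blast
  qed
  finally show ?thesis
    unfolding d_def by simp
qed

text \<open>On the diagonal the kernel is half the energy plus a small term, and the energy is
  nearly constant.\<close>

lemma diagonal_estimate:
  assumes y: "\<bar>y\<bar> \<le> T"
  shows "\<bar>((f y)\<^sup>2 + energy y) / 2 - N / pi\<bar> \<le> 17 * T\<^sup>2 / L"
proof -
  have split: "((f y)\<^sup>2 + energy y) / 2 - N / pi
      = (f y)\<^sup>2 / 2 + (energy y - energy 0) / 2 + (energy 0 - 2 / pi * L) / 2 - (N - L) / pi"
    by (simp add: field_simps)
  have b1: "(f y)\<^sup>2 / 2 \<le> 2/3 * (energy 0 / L\<^sup>2)"
    using f_sq_bound[OF y] by simp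
  have b2: "\<bar>energy y - energy 0\<bar> \<le> energy 0 * T\<^sup>2 / L\<^sup>2"
    by (rule energy_variation[OF y])
  have b3: "\<bar>energy 0 - 2 / pi * L\<bar> \<le> 2 * (1 / L)"
    using energy0_approx by simp
  have b4: "0 \<le> (N - L) / pi" "(N - L) / pi \<le> 1 / L"
  proof -
    show "0 \<le> (N - L) / pi"
      using N_close by simp
    have "(N - L) / pi \<le> (N - L) / 1"
      using N_close pi_ge_two by (intro divide_left_mono) auto
    also have "\<dots> \<le> 1 / L"
      using N_close(2) L_pos by (simp add: field_simps)
    finally show "(N - L) / pi \<le> 1 / L" .
  qed
  have combine: "\<bar>a / 2 + b / 2 + c / 2 - d\<bar> \<le> 17 * Y"
    if "0 \<le> a / 2" "a / 2 \<le> 2/3 * V" "\<bar>b\<bar> \<le> X" "\<bar>c\<bar> \<le> 2 * Z" "0 \<le> d" "d \<le> Z"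
      "V \<le> 1/5 * Y" "X \<le> 4/5 * Y" "Z \<le> 1/4 * Y" "0 \<le> Y"
    for a b c d V X Y Z :: real
    using that by linarith
  have "\<bar>((f y)\<^sup>2 + energy y) / 2 - N / pi\<bar> \<le> 17 * (T\<^sup>2 / L)"
    unfolding split
    by (rule combine[OF _ b1 b2 b3 b4 error_scales divide_nonneg_pos[OF zero_le_power2 L_pos]]) simp
  then show ?thesis by simp
qed

end

end

end

text \<open>The central ratio (2m-1)!!/(2m)!!, whose normalised square gives h_(2m)(0)^2, and the
  partial products of Wallis' formula for pi/2.\<close>

fun central_ratio :: "nat \<Rightarrow> real" where
  "central_ratio 0 = 1"
| "central_ratio (Suc m) = central_ratio m * (2 * real m + 1) / (2 * real m + 2)"

definition wallis_partial :: "nat \<Rightarrow> real" where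
  "wallis_partial n = (\<Prod>k=1..n. (4 * real k ^ 2) / (4 * real k ^ 2 - 1))"

lemma central_ratio_pos: "central_ratio m > 0"
  by (induction m) auto

lemma wallis_partial_Suc:
  "wallis_partial (Suc m)
     = wallis_partial m * ((2 * real m + 2)\<^sup>2 / ((2 * real m + 1) * (2 * real m + 3)))"
proof -
  have "wallis_partial (Suc m) = (4 * real (Suc m)^2) / (4 * real (Suc m)^2 - 1) * wallis_partial m"
    unfolding wallis_partial_def by (subst prod.nat_ivl_Suc') auto
  also have "(4 * real (Suc m)^2) / (4 * real (Suc m)^2 - 1)
      = (2 * real m + 2)\<^sup>2 / ((2 * real m + 1) * (2 * real m + 3))"
    by (simp add: power2_eq_square algebra_simps)
  finally show ?thesis by simp
qed

lemma wallis_partial_eq: "wallis_partial m = 1 / ((2 * real m + 1) * (central_ratio m)\<^sup>2)"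
proof (induction m)
  case 0
  then show ?case by (simp add: wallis_partial_def)
next
  case (Suc m)
  define A where "A = 2 * real m + 1"
  define B where "B = 2 * real m + 2"
  define C where "C = 2 * real m + 3"
  define x where "x = central_ratio m"
  have pos: "A > 0" "B > 0" "C > 0" "x > 0"
    using central_ratio_pos[of m] by (simp_all add: A_def B_def C_def x_def)
  have "wallis_partial (Suc m) = 1 / (A * x\<^sup>2) * (B\<^sup>2 / (A * C))"
    unfolding wallis_partial_Suc Suc.IH A_def B_def C_def x_def ..
  also have "\<dots> = 1 / (C * (x * A / B)\<^sup>2)"
    using pos by (simp add: field_simps power2_eq_square)
  also have "\<dots> = 1 / ((2 * real (Suc m) + 1) * (central_ratio (Suc m))\<^sup>2)"
    by (simp add: A_def B_def C_def x_def)
  finally show ?case .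
qed

text \<open>The Wallis partial products increase to pi/2.\<close>

lemma wallis_partial_le: "wallis_partial m \<le> pi / 2"
proof (rule incseq_le)
  show "wallis_partial \<longlonglongrightarrow> pi / 2"
    unfolding wallis_partial_def by (rule wallis)
  show "incseq wallis_partial"
  proof (rule incseq_SucI)
    fix m
    have "(2 * real m + 1) * (2 * real m + 3) > 0"
      by simp
    then have "1 \<le> (2 * real m + 2)\<^sup>2 / ((2 * real m + 1) * (2 * real m + 3))"
      by (subst le_divide_eq_1_pos) (auto simp: power2_eq_square algebra_simps)
    moreover have "wallis_partial m > 0"
      unfolding wallis_partial_eq using central_ratio_pos[of m] by simp
    ultimately have "wallis_partial m * 1
        \<le> wallis_partial m * ((2 * real m + 2)\<^sup>2 / ((2 * real m + 1) * (2 * real m + 3)))"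
      by (intro mult_left_mono) auto
    then show "wallis_partial m \<le> wallis_partial (Suc m)"
      unfolding wallis_partial_Suc by simp
  qed
qed

lemma central_ratio_lower: "2 / pi \<le> (2 * real m + 1) * (central_ratio m)\<^sup>2"
proof -
  define P where "P = (2 * real m + 1) * (central_ratio m)\<^sup>2"
  have "P > 0" "1 / P \<le> pi / 2"
    using central_ratio_pos[of m] wallis_partial_le[of m]
    by (simp_all add: P_def wallis_partial_eq)
  then show ?thesis
    unfolding P_def[symmetric] by (simp add: field_simps)
qed

lemma central_ratio_upper: "2 * real m * (central_ratio m)\<^sup>2 \<le> 2 / pi"
proof -
  define u where "u m = 2 * real m * (central_ratio m)\<^sup>2" for m
  have "incseq u"
  proof (rule incseq_SucI)
    fix m
    define A where "A = 2 * real m + 1"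
    define B where "B = 2 * real m + 2"
    have B0: "B > 0"
      by (simp add: B_def)
    have "u (Suc m) = B * (central_ratio m * A / B)\<^sup>2"
      unfolding u_def A_def B_def by simp
    also have "\<dots> = (central_ratio m)\<^sup>2 * (A\<^sup>2 / B)"
      using B0 by (simp add: field_simps power2_eq_square)
    finally have u_Suc: "u (Suc m) = (central_ratio m)\<^sup>2 * (A\<^sup>2 / B)" .
    have "2 * real m \<le> A\<^sup>2 / B"
      using B0 unfolding A_def B_def
      by (subst le_divide_eq) (auto simp: power2_eq_square algebra_simps)
    then have "(central_ratio m)\<^sup>2 * (2 * real m) \<le> (central_ratio m)\<^sup>2 * (A\<^sup>2 / B)"
      by (rule mult_left_mono) simp
    then show "u m \<le> u (Suc m)"
      unfolding u_Suc by (simp add: u_def mult.commute)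
  qed
  moreover have "u \<longlonglongrightarrow> 1 * inverse (pi / 2)"
  proof -
    have eq: "u = (\<lambda>m. (2 * real m / (2 * real m + 1)) * inverse (wallis_partial m))"
      using central_ratio_pos by (auto simp: u_def wallis_partial_eq fun_eq_iff)
    have "((\<lambda>n. real n / real (Suc n)) \<circ> (\<lambda>m. 2 * m)) \<longlonglongrightarrow> 1"
      by (rule LIMSEQ_subseq_LIMSEQ[OF LIMSEQ_n_over_Suc_n]) (simp add: strict_mono_def)
    then have "(\<lambda>m. 2 * real m / (2 * real m + 1)) \<longlonglongrightarrow> 1"
      by (simp add: o_def add.commute)
    moreover have "(\<lambda>m. inverse (wallis_partial m)) \<longlonglongrightarrow> inverse (pi / 2)"
      unfolding wallis_partial_def by (rule tendsto_inverse[OF wallis]) simp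
    ultimately show ?thesis
      unfolding eq by (rule tendsto_mult)
  qed
  ultimately have "u m \<le> 1 * inverse (pi / 2)"
    by (rule incseq_le)
  then show ?thesis
    unfolding u_def by simp
qed

lemma hermite_fun_0_odd: "hermite_fun (2 * m + 1) 0 = 0"
proof (induction m)
  case 0
  show ?case using hermite_fun_1[of 0] hcoef_pos[of 0] by simp
next
  case (Suc m)
  have "hcoef (Suc (2*m+1)) * hermite_fun (Suc (Suc (2*m+1))) 0 = 0"
    using hermite_fun_rec[of "2*m+1" 0] Suc.IH by simp
  then show ?case using hcoef_pos[of "Suc (2*m+1)"] by simp
qed

lemma hermite_fun_0_even: "(hermite_fun (2 * m) 0)\<^sup>2 = central_ratio m / sqrt pi"
proof (induction m)
  case 0
  have "(pi powr (1/4))\<^sup>2 = sqrt pi"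
    by (simp add: power2_eq_square powr_add[symmetric] powr_half_sqrt)
  then show ?case
    by (simp add: hermite_fun_eq hermite_const_def power_divide)
next
  case (Suc m)
  have "(hcoef (Suc (2*m)))\<^sup>2 * (hermite_fun (Suc (Suc (2*m))) 0)\<^sup>2
      = (hcoef (2*m))\<^sup>2 * (hermite_fun (2*m) 0)\<^sup>2"
    using hermite_fun_rec[of "2*m" 0] by (simp add: power_mult_distrib[symmetric])
  then have "(2 * real m + 2) * (hermite_fun (2 * Suc m) 0)\<^sup>2
      = (2 * real m + 1) * (hermite_fun (2*m) 0)\<^sup>2"
    by (simp add: hcoef_sq field_simps)
  then have "(hermite_fun (2 * Suc m) 0)\<^sup>2 = (2 * real m + 1) * (hermite_fun (2*m) 0)\<^sup>2 / (2 * real m + 2)"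
    by (simp add: field_simps)
  also have "\<dots> = central_ratio (Suc m) / sqrt pi"
    unfolding Suc.IH by (simp add: mult.commute)
  finally show ?case .
qed

lemma central_ratio_pi_bounds:
  shows "real m * ((central_ratio m)\<^sup>2 * pi) \<le> 1"
    and "2 \<le> (2 * real m + 1) * ((central_ratio m)\<^sup>2 * pi)"
proof -
  have "2 * real m * (central_ratio m)\<^sup>2 * pi \<le> 2 / pi * pi"
    using central_ratio_upper[of m] by (intro mult_right_mono) auto
  then show "real m * ((central_ratio m)\<^sup>2 * pi) \<le> 1"
    by (simp add: algebra_simps)
  have "2 / pi * pi \<le> (2 * real m + 1) * (central_ratio m)\<^sup>2 * pi"
    using central_ratio_lower[of m] by (intro mult_right_mono) auto
  then show "2 \<le> (2 * real m + 1) * ((central_ratio m)\<^sup>2 * pi)"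
    by (simp add: algebra_simps)
qed

lemma square_window:
  fixes M q :: real
  assumes M1: "M \<ge> 1" and up: "M * q \<le> 1" and lo: "2 \<le> (2 * M + 1) * q"
  shows "\<bar>(4 * M + 1)\<^sup>2 * q - 4 * (4 * M + 1)\<bar> \<le> 8"
    and "\<bar>16 * M\<^sup>2 * q - 4 * (4 * M - 1)\<bar> \<le> 8"
proof -
  have q0: "q \<ge> 0"
    using lo M1 by (smt (verit) mult_nonneg_nonpos)
  have f1: "M * (M * q) \<le> M"
    using mult_left_mono[OF up] M1 by simp
  have f2: "2 * M \<le> 2 * (M * (M * q)) + M * q"
    using mult_left_mono[OF lo, of M] M1 by (simp add: algebra_simps)
  have f3: "q \<le> M * q"
    using mult_right_mono[OF M1 q0] by simp
  show "\<bar>(4 * M + 1)\<^sup>2 * q - 4 * (4 * M + 1)\<bar> \<le> 8"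
    using f1 f2 f3 up q0 by (simp add: power2_eq_square algebra_simps abs_le_iff)
  show "\<bar>16 * M\<^sup>2 * q - 4 * (4 * M - 1)\<bar> \<le> 8"
    using f1 f2 f3 up q0 by (simp add: power2_eq_square algebra_simps abs_le_iff)
qed

definition hermite_energy0 :: "nat \<Rightarrow> real" where
  "hermite_energy0 n = (hermite_fun_deriv n 0)\<^sup>2 + (2 * real n + 1) * (hermite_fun n 0)\<^sup>2"

lemma hermite_energy0_sq:
  assumes "n \<ge> 1"
  shows "\<bar>(hermite_energy0 n)\<^sup>2 * pi\<^sup>2 - 4 * (2 * real n + 1)\<bar> \<le> 8"
proof -
  have deriv0: "(hermite_fun_deriv k 0)\<^sup>2 = 2 * (real k + 1) * (hermite_fun (Suc k) 0)\<^sup>2" for k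
    by (simp add: hermite_fun_deriv_def power_mult_distrib hcoef_sq)
  have sq: "(c * (A / sqrt pi))\<^sup>2 * pi\<^sup>2 = c\<^sup>2 * (A\<^sup>2 * pi)" for c A :: real
    by (simp add: power_mult_distrib power_divide power2_eq_square)
  show ?thesis
  proof (cases "even n")
    case True
    then obtain m where n: "n = 2 * m" by (auto elim: evenE)
    have "hermite_energy0 n = (4 * real m + 1) * (central_ratio m / sqrt pi)"
      unfolding hermite_energy0_def deriv0 n
      using hermite_fun_0_odd[of m] hermite_fun_0_even[of m] by simp
    then have "(hermite_energy0 n)\<^sup>2 * pi\<^sup>2 = (4 * real m + 1)\<^sup>2 * ((central_ratio m)\<^sup>2 * pi)"
      by (simp only: sq)
    then show ?thesis
      using square_window(1)[OF _ central_ratio_pi_bounds[of m]] assms n by simp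
  next
    case False
    then obtain m where n: "n = 2 * m + 1" by (metis oddE)
    have "hermite_energy0 n = (4 * real (Suc m)) * (central_ratio (Suc m) / sqrt pi)"
      unfolding hermite_energy0_def deriv0
      using hermite_fun_0_odd[of m] hermite_fun_0_even[of "Suc m"] n by simp
    then have "(hermite_energy0 n)\<^sup>2 * pi\<^sup>2
        = 16 * (real (Suc m))\<^sup>2 * ((central_ratio (Suc m))\<^sup>2 * pi)"
      by (simp only: sq) (simp add: power2_eq_square algebra_simps del: central_ratio.simps)
    then show ?thesis
      using square_window(2)[OF _ central_ratio_pi_bounds[of "Suc m"]] n
      by (simp del: central_ratio.simps)
  qed
qed

lemma hermite_energy0_bounds:
  assumes n: "n \<ge> 1" and L_sq: "L\<^sup>2 = 2 * real n + 1" and L4: "L \<ge> 4"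
  shows "\<bar>hermite_energy0 n - 2 / pi * L\<bar> \<le> 2 / L" and "hermite_energy0 n \<le> 4/5 * L"
proof -
  define \<mu> where "\<mu> = 2 / pi"
  define E where "E = hermite_energy0 n"
  have \<mu>: "0 < \<mu>" "\<mu> \<le> 2/3"
    unfolding \<mu>_def using pi_gt3 by (auto simp: field_simps)
  have L_pos: "L > 0"
    using L4 by simp
  have E_pos: "E + \<mu> * L \<ge> \<mu> * L" "\<mu> * L > 0"
    using \<mu> L_pos by (auto simp: E_def hermite_energy0_def)
  have "\<bar>E\<^sup>2 - \<mu>\<^sup>2 * L\<^sup>2\<bar> = \<bar>E\<^sup>2 * pi\<^sup>2 - 4 * (2 * real n + 1)\<bar> / pi\<^sup>2"
  proof -
    have "E\<^sup>2 - \<mu>\<^sup>2 * L\<^sup>2 = (E\<^sup>2 * pi\<^sup>2 - 4 * (2 * real n + 1)) / pi\<^sup>2"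
      unfolding \<mu>_def L_sq by (simp add: field_simps power2_eq_square)
    then show ?thesis by (simp add: abs_divide)
  qed
  also have "\<dots> \<le> 8 / pi\<^sup>2"
    using hermite_energy0_sq[OF n] by (intro divide_right_mono) (simp_all add: E_def)
  also have "\<dots> = 2 * \<mu>\<^sup>2"
    unfolding \<mu>_def by (simp add: power_divide)
  finally have bound: "\<bar>E\<^sup>2 - \<mu>\<^sup>2 * L\<^sup>2\<bar> \<le> 2 * \<mu>\<^sup>2" .
  have "\<bar>E - \<mu> * L\<bar> * (E + \<mu> * L) = \<bar>(E - \<mu> * L) * (E + \<mu> * L)\<bar>"
    using E_pos by (simp add: abs_mult)
  also have "\<dots> = \<bar>E\<^sup>2 - \<mu>\<^sup>2 * L\<^sup>2\<bar>"
    by (simp add: algebra_simps power2_eq_square)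
  finally have "\<bar>E - \<mu> * L\<bar> * (E + \<mu> * L) \<le> 2 * \<mu>\<^sup>2"
    using bound by simp
  moreover have "\<bar>E - \<mu> * L\<bar> * (\<mu> * L) \<le> \<bar>E - \<mu> * L\<bar> * (E + \<mu> * L)"
    using E_pos by (intro mult_left_mono) auto
  ultimately have "\<bar>E - \<mu> * L\<bar> * (\<mu> * L) \<le> 2 * \<mu>\<^sup>2"
    by linarith
  then have close: "\<bar>E - \<mu> * L\<bar> \<le> 2 * \<mu> / L"
    using \<mu> L_pos by (simp add: field_simps power2_eq_square)
  moreover have "2 * \<mu> / L \<le> 2 / L"
    using \<mu> L_pos by (simp add: field_simps)
  ultimately show "\<bar>hermite_energy0 n - 2 / pi * L\<bar> \<le> 2 / L"
    unfolding E_def \<mu>_def by linarith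
  have "2 * \<mu> / L \<le> L / 12"
  proof -
    have "2 * \<mu> \<le> 16 / 12"
      using \<mu> by simp
    also have "16 / 12 \<le> L * L / 12"
      using mult_mono[OF L4 L4] L_pos by simp
    finally show ?thesis
      using L_pos by (simp add: field_simps)
  qed
  moreover have "\<mu> * L \<le> 2/3 * L"
    using \<mu> L_pos by (simp add: mult_right_mono)
  ultimately show "hermite_energy0 n \<le> 4/5 * L"
    using close unfolding E_def by linarith
qed

lemma sqrt_mean_gap:
  fixes a :: real
  assumes "a > 0"
  shows "0 \<le> (sqrt a + sqrt (a + 2)) / 2 - sqrt a"
    and "(sqrt a + sqrt (a + 2)) / 2 - sqrt a \<le> 1 / (2 * sqrt a)"
proof -
  define L where "L = sqrt a"
  define S where "S = sqrt (a + 2)"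
  have L_pos: "L > 0"
    using assms by (simp add: L_def)
  have LS: "L \<le> S"
    unfolding L_def S_def by (rule real_sqrt_le_mono) simp
  then show "0 \<le> (sqrt a + sqrt (a + 2)) / 2 - sqrt a"
    by (simp add: L_def S_def)
  have "(S - L) * (S + L) = 2"
    using assms by (simp add: L_def S_def algebra_simps)
  moreover have "(S - L) * (2 * L) \<le> (S - L) * (S + L)"
    using LS by (intro mult_left_mono) auto
  ultimately have "S - L \<le> 1 / L"
    using L_pos by (simp add: field_simps)
  then show "(sqrt a + sqrt (a + 2)) / 2 - sqrt a \<le> 1 / (2 * sqrt a)"
    using L_pos unfolding L_def[symmetric] S_def[symmetric] by (simp add: field_simps)
qed

theorem mainTheorem5:
  fixes T :: real and n :: nat and x y :: real
  assumes "T \<ge> 2"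
    and "real n \<ge> 2 * T\<^sup>2"
    and "x \<in> {-T..T}" and "y \<in> {-T..T}"
  shows "\<bar>hermite_kernel n x y
            - sine_kernel ((sqrt (2 * real n + 1) + sqrt (2 * real n + 3)) / 2) x y\<bar>
         \<le> 17 * T\<^sup>2 / sqrt (2 * real n + 1)"
proof -
  define L where "L = sqrt (2 * real n + 1)"
  define N where "N = (sqrt (2 * real n + 1) + sqrt (2 * real n + 3)) / 2"
  have L_sq: "L\<^sup>2 = 2 * real n + 1"
    by (simp add: L_def)
  interpret hermite_ode "hermite_fun n" "hermite_fun_deriv n" L
    by unfold_locales (simp_all add: has_deriv_hermite_fun has_deriv_hermite_fun_deriv L_sq)
  have T4: "4 \<le> T\<^sup>2"
    using square_le_square[of 2 T] assms(1) by simp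
  have TL: "4 * T\<^sup>2 \<le> L\<^sup>2" and n1: "n \<ge> 1"
    using assms(2) T4 by (simp_all add: L_sq)
  have L4: "L \<ge> 4"
    using real_sqrt_le_mono[of 16 "2 * real n + 1"] assms(2) T4 by (simp add: L_def)
  then have L_pos: "L > 0"
    by simp
  have energy0: "energy 0 = hermite_energy0 n"
    by (simp add: energy_def hermite_energy0_def L_sq)
  have N_close: "0 \<le> N - L" "N - L \<le> 1 / (2 * L)"
    using sqrt_mean_gap[of "2 * real n + 1"] by (simp_all add: N_def L_def add.assoc)
  note estimates = off_diagonal_estimate[OF TL L_pos assms(1)
      hermite_energy0_bounds[OF n1 L_sq L4, folded energy0] N_close]
    diagonal_estimate[OF TL L_pos assms(1)
      hermite_energy0_bounds[OF n1 L_sq L4, folded energy0] N_close]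
  have "\<bar>x\<bar> \<le> T" "\<bar>y\<bar> \<le> T"
    using assms(3,4) by auto
  txt \<open>On the diagonal the kernel is half of h_n^2 plus the energy, off it the
    Christoffel--Darboux expression; both match the two estimates.\<close>
  then have "\<bar>hermite_kernel n x y - sine_kernel N x y\<bar> \<le> 17 * T\<^sup>2 / L"
    using estimates
    by (cases "x = y") (simp_all add: sine_kernel_def hermite_kernel_diag hermite_kernel_off_diag
        energy_def L_sq add.assoc)
  then show ?thesis
    by (simp add: N_def L_def)
qed

end
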